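(* Let $\mathcal{X},\mathcal{Y}$ be finite, $p(X,Y)\in\Delta_{\mathcal{X}\times\mathcal{Y}}$ of full support, $\mathcal{T}=\mathbb{N}$, $\mathcal{E}_{\mathrm{ce}}:=\{r(X)\,\mathcal{U}(\mathcal{Y}) : r\in\Delta_{\mathcal{X}}\}$, and let $\mathrm{DIB}_{\mathrm{ce}}(\lambda)$ denote the DIB problem on $\mathcal{A}=\mathcal{X}\times\mathcal{Y}$ with exponential family $\mathcal{E}_{\mathrm{ce}}$ and unconstrained encoders $C=C(\mathcal{X}\times\mathcal{Y},\mathcal{T})$. Let $\Lambda:=D(p\|\mathcal{E}_{\mathrm{ce}})$. Then for all $(\sigma,\tau)\in\mathrm{Bij}(\mathcal{X})\times\mathrm{Bij}(\mathcal{Y})$: (i) if $\kappa\in\mathrm{DIB}_{\mathrm{ce}}(\Lambda)$, then $(\sigma,\tau)\in G_{\mathrm{ce}}$ if and only if $\kappa\circ(\sigma\otimes\tau)=\kappa$; (ii) if $(\sigma,\tau)\in G_{\mathrm{ce}}$, then $\kappa\circ(\sigma\otimes\tau)=\kappa$ for every $0\le\lambda\le\Lambda$ and every $\kappa\in\mathrm{DIB}_{\mathrm{ce}}(\lambda)$; (iii) the projection $\pi$ associated with the equivalence relation $(x,y)\sim(x',y')\iff p(y|x)=p(y'|x')$ does not coincide with the projection on $G_{\mathrm{ce}}$-orbits in general: there exist finite $\mathcal{X},\mathcal{Y}$ and a full-support $p(X,Y)$ for which $\pi\neq\pi_{\mathrm{ce}}$ (e.g. $|\mathcal{X}|=3$,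 $|\mathcal{Y}|=2$).
   Context: $\mathcal{U}(\mathcal{Y})$ is the uniform distribution; $(\sigma\otimes\tau)(x,y)=(\sigma(x),\tau(y))$. The channel equivariance group $G_{\mathrm{ce}}$ is the group of pairs $(\sigma,\tau)\in\mathrm{Bij}(\mathcal{X})\times\mathrm{Bij}(\mathcal{Y})$ with $p(Y|X)\circ\sigma=\tau\circ p(Y|X)$, equivalently $p(\tau(y)|\sigma(x))=p(y|x)$ for all $x,y$; $\pi_{\mathrm{ce}}$ is the projection onto $G_{\mathrm{ce}}$-orbits of $\mathcal{X}\times\mathcal{Y}$. DIB problem: for finite $\mathcal{A}$, $p\in\Delta_{\mathcal{A}}$, exponential family $\mathcal{E}\subseteq\Delta_{\mathcal{A}}$ with closure $\mathrm{cl}\,\mathcal{E}$, encoder set $C\subseteq C(\mathcal{A},\mathcal{T})$, $D(p\|\mathcal{E}):=\inf_{r\in\mathrm{cl}\mathcal{E}}D(p\|r)$, $D(\kappa\cdot p\|\kappa\cdot\mathcal{E}):=\inf_{r\in\mathrm{cl}\mathcal{E}}D(\kappa\cdot p\|\kappa\cdot r)$ where $(\kappa\cdot r)(t)=\sum_a\kappa(t|a)r(a)$, and $\mathrm{DIB}(\lambda):=\operatorname{argmin}\{I_\kappa(A;T):\kappa\in C,\ D(\kappa\cdot p\|\kappa\cdot\mathcal{E})\ge\lambda\}$ for $0\le\lambda\le D(p\|\mathcal{E})$, with $I_\kappa$ computed from $p(a)\kappa(t|a)$. Channels compose by $(\mu\circ\kappa)(c|a)=\sum_b\mu(c|b)\kappa(b|a)$;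 bijections are deterministic channels. *)

theory Defs
  imports "HOL-Analysis.Analysis" "HOL-Library.Numeral_Type"
begin

definition prob_simplex :: "('a::finite \<Rightarrow> real) set" where
  "prob_simplex = {r. (\<forall>a. 0 \<le> r a) \<and> sum r UNIV = 1}"

definition full_support :: "('a::finite \<Rightarrow> real) \<Rightarrow> bool" where
  "full_support p \<longleftrightarrow> p \<in> prob_simplex \<and> (\<forall>a. 0 < p a)"

text \<open>Channels (Markov kernels) from a finite type 'a to T = nat:
  kappa a t is kappa(t|a).\<close>
definition is_channel :: "('a \<Rightarrow> nat \<Rightarrow> real) \<Rightarrow> bool" where
  "is_channel \<kappa> \<longleftrightarrow> (\<forall>a t. 0 \<le> \<kappa> a t) \<and> (\<forall>a. ((\<kappa> a) has_sum 1) UNIV)"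

definition push :: "('a::finite \<Rightarrow> 'b \<Rightarrow> real) \<Rightarrow> ('a \<Rightarrow> real) \<Rightarrow> 'b \<Rightarrow> real" where
  "push \<kappa> r t = (\<Sum>a\<in>UNIV. \<kappa> a t * r a)"

definition chan_comp :: "('b::finite \<Rightarrow> 'c \<Rightarrow> real) \<Rightarrow> ('a \<Rightarrow> 'b \<Rightarrow> real) \<Rightarrow> 'a \<Rightarrow> 'c \<Rightarrow> real" where
  "chan_comp \<mu> \<kappa> a c = (\<Sum>b\<in>UNIV. \<mu> b c * \<kappa> a b)"

definition det_chan :: "('a \<Rightarrow> 'b) \<Rightarrow> 'a \<Rightarrow> 'b \<Rightarrow> real" where
  "det_chan f a b = (if b = f a then 1 else 0)"

definition kl_term :: "real \<Rightarrow> real \<Rightarrow> ereal" where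
  "kl_term q r = (if q = 0 then 0 else if r = 0 then \<infinity> else ereal (q * ln (q / r)))"

definition KL :: "('b \<Rightarrow> real) \<Rightarrow> ('b \<Rightarrow> real) \<Rightarrow> ereal" where
  "KL q r = (\<Sum>\<^sub>\<infinity>t\<in>UNIV. kl_term (q t) (r t))"

definition mutual_info :: "('a::finite \<Rightarrow> real) \<Rightarrow> ('a \<Rightarrow> nat \<Rightarrow> real) \<Rightarrow> ereal" where
  "mutual_info p \<kappa> = (\<Sum>a\<in>UNIV. ereal (p a) * KL (\<kappa> a) (push \<kappa> p))"

definition E_ce :: "('x::finite \<times> 'y::finite \<Rightarrow> real) set" where
  "E_ce = {(\<lambda>(x, y). r x / real CARD('y)) | r. r \<in> prob_simplex}"

definition D_fam :: "('a \<Rightarrow> real) \<Rightarrow> ('a \<Rightarrow> real) set \<Rightarrow> ereal" where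
  "D_fam p E = (INF r\<in>closure E. KL p r)"

definition D_push_fam :: "('a::finite \<Rightarrow> nat \<Rightarrow> real) \<Rightarrow> ('a \<Rightarrow> real) \<Rightarrow> ('a \<Rightarrow> real) set \<Rightarrow> ereal" where
  "D_push_fam \<kappa> p E = (INF r\<in>closure E. KL (push \<kappa> p) (push \<kappa> r))"

definition DIB_ce :: "('x::finite \<times> 'y::finite \<Rightarrow> real) \<Rightarrow> ereal \<Rightarrow> ('x \<times> 'y \<Rightarrow> nat \<Rightarrow> real) set" where
  "DIB_ce p lam =
     {\<kappa>. is_channel \<kappa> \<and> lam \<le> D_push_fam \<kappa> p E_ce \<and>
          (\<forall>\<kappa>'. is_channel \<kappa>' \<and> lam \<le> D_push_fam \<kappa>' p E_ce \<longrightarrow> mutual_info p \<kappa> \<le> mutual_info p \<kappa>')}"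

definition cond_prob :: "('x \<times> 'y::finite \<Rightarrow> real) \<Rightarrow> 'x \<Rightarrow> 'y \<Rightarrow> real" where
  "cond_prob p x y = p (x, y) / (\<Sum>y'\<in>UNIV. p (x, y'))"

definition G_ce :: "('x \<times> 'y::finite \<Rightarrow> real) \<Rightarrow> (('x \<Rightarrow> 'x) \<times> ('y \<Rightarrow> 'y)) set" where
  "G_ce p = {(\<sigma>, \<tau>). bij \<sigma> \<and> bij \<tau> \<and> (\<forall>x y. cond_prob p (\<sigma> x) (\<tau> y) = cond_prob p x y)}"

definition proj_ce :: "('x \<times> 'y::finite \<Rightarrow> real) \<Rightarrow> 'x \<times> 'y \<Rightarrow> ('x \<times> 'y) set" where
  "proj_ce p a = {(\<sigma> (fst a), \<tau> (snd a)) | \<sigma> \<tau>. (\<sigma>, \<tau>) \<in> G_ce p}"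

definition proj_cond :: "('x \<times> 'y::finite \<Rightarrow> real) \<Rightarrow> 'x \<times> 'y \<Rightarrow> ('x \<times> 'y) set" where
  "proj_cond p a = {b. cond_prob p (fst b) (snd b) = cond_prob p (fst a) (snd a)}"

end

theory Submission
  imports Defs
begin

text \<open>
  Let g = sigma x tau. If (sigma, tau) is in G_ce, average an encoder over the g-orbits with
  weights p. Because p(y|x) is constant along orbits, the averaged encoder sends p to the same
  output distribution and pulls back every member of E_ce to a member of E_ce, so it is still
  feasible; and since the log-ratio of the average to the output distribution is g-invariant,
  mutual information splits as I(kappa) = I(average) + sum_a p(a) D(kappa_a || average_a).
  A minimiser therefore equals its average and is g-invariant.

  Conversely, let kappa be a g-invariant minimiser at lambda = D(p || E_ce), which is attained
  at the product q of the x-marginal of p with the uniform distribution. Then kappa maps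
  (p + p o g)/2 and p to the same output, so feasibility and the data processing inequality give
  D(p || q) <= D((p + p o g)/2 || (q + q o g)/2). Joint convexity gives the reverse inequality, and
  its equality case forces p/q = (p o g)/(q o g), which is the invariance of p(y|x).
\<close>

lemma xlnx_ge_diff:
  fixes u v :: real
  assumes "0 < u" "0 < v"
  shows "u - v \<le> u * ln (u / v)"
proof -
  have "u * ln (v / u) \<le> u * (v / u - 1)"
    using assms by (intro mult_left_mono ln_le_minus_one) auto
  also have "\<dots> = v - u"
    using assms by (simp add: field_simps)
  finally show ?thesis
    using assms by (simp add: ln_div algebra_simps)
qed

lemma xlnx_eq_diff_imp_eq:
  fixes u v :: real
  assumes "0 < u" "0 < v" and "u * ln (u / v) = u - v"
  shows "u = v"
proof -
  have "ln (v / u) = v / u - 1"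
    using assms by (simp add: ln_div field_simps)
  then show ?thesis
    using ln_eq_minus_one[of "v / u"] assms by simp
qed

lemma log_sum_inequality:
  fixes \<alpha> \<beta> :: "'a \<Rightarrow> real"
  assumes "finite S" and \<alpha>: "\<And>a. a \<in> S \<Longrightarrow> 0 \<le> \<alpha> a" and \<beta>: "\<And>a. a \<in> S \<Longrightarrow> 0 \<le> \<beta> a"
    and supp: "\<And>a. a \<in> S \<Longrightarrow> \<alpha> a \<noteq> 0 \<Longrightarrow> 0 < \<beta> a"
  shows "(\<Sum>a\<in>S. \<alpha> a) * ln ((\<Sum>a\<in>S. \<alpha> a) / (\<Sum>a\<in>S. \<beta> a)) \<le> (\<Sum>a\<in>S. \<alpha> a * ln (\<alpha> a / \<beta> a))"
proof (cases "\<forall>a\<in>S. \<alpha> a = 0")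
  case True
  then show ?thesis by simp
next
  case False
  then obtain a1 where a1: "a1 \<in> S" "\<alpha> a1 \<noteq> 0" by blast
  define A where "A = (\<Sum>a\<in>S. \<alpha> a)"
  define B where "B = (\<Sum>a\<in>S. \<beta> a)"
  have "0 < \<alpha> a1" using \<alpha>[OF a1(1)] a1(2) by simp
  moreover have "\<alpha> a1 \<le> A"
    unfolding A_def by (rule member_le_sum) (use a1 \<alpha> \<open>finite S\<close> in auto)
  ultimately have "0 < A" by linarith
  have "0 < \<beta> a1" using supp[OF a1] .
  moreover have "\<beta> a1 \<le> B"
    unfolding B_def by (rule member_le_sum) (use a1 \<beta> \<open>finite S\<close> in auto)
  ultimately have "0 < B" by linarith
  have pointwise: "\<alpha> a - \<beta> a * (A / B) \<le> \<alpha> a * ln (\<alpha> a / \<beta> a) - \<alpha> a * ln (A / B)"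
    if "a \<in> S" for a
  proof (cases "\<alpha> a = 0")
    case True
    then show ?thesis using \<beta>[OF that] \<open>0 < A\<close> \<open>0 < B\<close> by simp
  next
    case False
    then have "0 < \<alpha> a" "0 < \<beta> a" using \<alpha>[OF that] supp[OF that] by auto
    then have "\<alpha> a - \<beta> a * (A / B) \<le> \<alpha> a * ln (\<alpha> a / (\<beta> a * (A / B)))"
      using \<open>0 < A\<close> \<open>0 < B\<close> by (intro xlnx_ge_diff) auto
    also have "\<dots> = \<alpha> a * ln (\<alpha> a / \<beta> a) - \<alpha> a * ln (A / B)"
      using \<open>0 < \<alpha> a\<close> \<open>0 < \<beta> a\<close> \<open>0 < A\<close> \<open>0 < B\<close> by (simp add: ln_div ln_mult algebra_simps)
    finally show ?thesis .
  qed
  have "(\<Sum>a\<in>S. \<beta> a * (A / B)) = B * (A / B)"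
    unfolding B_def by (rule sum_distrib_right[symmetric])
  then have "0 = (\<Sum>a\<in>S. \<alpha> a - \<beta> a * (A / B))"
    using \<open>0 < B\<close> by (simp add: sum_subtractf A_def)
  also have "\<dots> \<le> (\<Sum>a\<in>S. \<alpha> a * ln (\<alpha> a / \<beta> a) - \<alpha> a * ln (A / B))"
    by (rule sum_mono) (rule pointwise)
  finally show ?thesis
    by (simp add: sum_subtractf A_def B_def flip: sum_distrib_right)
qed

lemma log_sum_two:
  fixes a1 a2 b1 b2 :: real
  assumes "0 < a1" "0 < a2" "0 < b1" "0 < b2"
  shows "(a1 + a2) * ln ((a1 + a2) / (b1 + b2)) \<le> a1 * ln (a1 / b1) + a2 * ln (a2 / b2)"
    and "(a1 + a2) * ln ((a1 + a2) / (b1 + b2)) = a1 * ln (a1 / b1) + a2 * ln (a2 / b2)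
           \<Longrightarrow> a1 / b1 = a2 / b2"
proof -
  define c where "c = (a1 + a2) / (b1 + b2)"
  have "0 < c" using assms by (simp add: c_def)
  have split: "a * ln (a / b) - a * ln c = a * ln (a / (c * b))" if "0 < a" "0 < b" for a b
    using that \<open>0 < c\<close> by (simp add: ln_div ln_mult algebra_simps)
  have d1: "a1 - c * b1 \<le> a1 * ln (a1 / (c * b1))"
    and d2: "a2 - c * b2 \<le> a2 * ln (a2 / (c * b2))"
    using assms \<open>0 < c\<close> by (intro xlnx_ge_diff; simp)+
  have c_sum: "a1 - c * b1 + (a2 - c * b2) = 0"
    using assms by (simp add: c_def field_simps)
  have gap: "a1 * ln (a1 / b1) + a2 * ln (a2 / b2) - (a1 + a2) * ln c
      = a1 * ln (a1 / (c * b1)) + a2 * ln (a2 / (c * b2))"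
    using split[OF assms(1,3)] split[OF assms(2,4)] by (simp add: algebra_simps)
  show "(a1 + a2) * ln ((a1 + a2) / (b1 + b2)) \<le> a1 * ln (a1 / b1) + a2 * ln (a2 / b2)"
    using gap d1 d2 c_sum unfolding c_def by linarith
  assume "(a1 + a2) * ln ((a1 + a2) / (b1 + b2)) = a1 * ln (a1 / b1) + a2 * ln (a2 / b2)"
  then have e1: "a1 * ln (a1 / (c * b1)) = a1 - c * b1"
    and e2: "a2 * ln (a2 / (c * b2)) = a2 - c * b2"
    using gap d1 d2 c_sum unfolding c_def by linarith+
  have "a1 = c * b1" "a2 = c * b2"
    using xlnx_eq_diff_imp_eq[OF _ _ e1] xlnx_eq_diff_imp_eq[OF _ _ e2] assms \<open>0 < c\<close> by auto
  then show "a1 / b1 = a2 / b2"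
    using assms by simp
qed

lemma has_sum_sum:
  fixes f :: "'i \<Rightarrow> 'a \<Rightarrow> 'b::topological_comm_monoid_add"
  assumes "finite I" "\<And>i. i \<in> I \<Longrightarrow> (f i has_sum s i) A"
  shows "((\<lambda>x. \<Sum>i\<in>I. f i x) has_sum (\<Sum>i\<in>I. s i)) A"
  using assms by (induction I rule: finite_induct) (simp_all add: has_sum_add)

lemma infsum_ereal:
  fixes f :: "'a \<Rightarrow> real"
  assumes "f summable_on A"
  shows "(\<Sum>\<^sub>\<infinity>x\<in>A. ereal (f x)) = ereal (\<Sum>\<^sub>\<infinity>x\<in>A. f x)"
proof -
  have "infsum (ereal \<circ> f) A = ereal (infsum f A)"
  proof (rule infsum_comm_additive_general)
    show "isCont ereal (infsum f A)"
      using continuous_on_ereal[OF continuous_on_id, of UNIV]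
      by (simp add: continuous_on_eq_continuous_at)
  qed (auto simp: assms)
  then show ?thesis by (simp add: o_def)
qed

lemma KL_eq_infsum:
  assumes "\<And>t. P t \<noteq> 0 \<Longrightarrow> Q t \<noteq> 0"
    and "(\<lambda>t. P t * ln (P t / Q t)) summable_on UNIV"
  shows "KL P Q = ereal (\<Sum>\<^sub>\<infinity>t. P t * ln (P t / Q t))"
proof -
  have "kl_term (P t) (Q t) = ereal (P t * ln (P t / Q t))" for t
    using assms(1) by (auto simp: kl_term_def)
  then show ?thesis
    unfolding KL_def by (simp add: infsum_ereal[OF assms(2)])
qed

lemma KL_finite:
  fixes P Q :: "'a::finite \<Rightarrow> real"
  assumes "\<And>a. 0 < Q a"
  shows "KL P Q = ereal (\<Sum>a\<in>UNIV. P a * ln (P a / Q a))"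
proof -
  have "kl_term (P a) (Q a) = ereal (P a * ln (P a / Q a))" for a
    using assms[of a] by (simp add: kl_term_def)
  then show ?thesis
    unfolding KL_def by simp
qed

lemma KL_finite_eq_infinity:
  fixes P Q :: "'a::finite \<Rightarrow> real"
  assumes "0 < P a" "Q a = 0"
  shows "KL P Q = \<infinity>"
proof -
  have "kl_term (P a) (Q a) = \<infinity>"
    using assms by (simp add: kl_term_def)
  then show ?thesis
    unfolding KL_def by (auto simp: sum_Pinfty)
qed

lemma summable_on_kl_if_dominated:
  fixes P Q :: "'a \<Rightarrow> real"
  assumes P0: "\<And>t. 0 \<le> P t" and Q0: "\<And>t. 0 \<le> Q t"
    and "P summable_on UNIV" "Q summable_on UNIV"
    and supp: "\<And>t. P t \<noteq> 0 \<Longrightarrow> 0 < Q t"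
    and "0 < c" and dom: "\<And>t. P t \<le> c * Q t"
  shows "(\<lambda>t. P t * ln (P t / Q t)) summable_on UNIV"
proof -
  let ?g = "\<lambda>t. P t * \<bar>ln c\<bar> + Q t"
  have "?g summable_on UNIV"
    using assms by (intro summable_on_add summable_on_cmult_left) auto
  then have "(\<lambda>t. norm (P t * ln (P t / Q t))) summable_on UNIV"
  proof (rule Infinite_Sum.abs_summable_on_comparison_test')
    fix t
    show "norm (P t * ln (P t / Q t)) \<le> ?g t"
    proof (cases "P t = 0")
      case True
      then show ?thesis using Q0[of t] by simp
    next
      case False
      then have "0 < P t" "0 < Q t" using P0[of t] supp[of t] by auto
      then have "ln (P t / Q t) \<le> ln c"
        using dom[of t] \<open>0 < c\<close> by (simp add: divide_le_eq)
      then have "P t * ln (P t / Q t) \<le> P t * \<bar>ln c\<bar>"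
        using \<open>0 < P t\<close> by (intro mult_left_mono) auto
      moreover have "P t - Q t \<le> P t * ln (P t / Q t)"
        using xlnx_ge_diff[OF \<open>0 < P t\<close> \<open>0 < Q t\<close>] .
      moreover have "0 \<le> P t * \<bar>ln c\<bar>"
        using \<open>0 < P t\<close> by simp
      ultimately show ?thesis
        unfolding real_norm_def abs_le_iff using \<open>0 < P t\<close> \<open>0 < Q t\<close> by (intro conjI; linarith)
    qed
  qed
  then show ?thesis
    using summable_on_iff_abs_summable_on_real by blast
qed

lemma gibbs_inequality:
  fixes P Q :: "'a \<Rightarrow> real"
  assumes P0: "\<And>t. 0 \<le> P t" and Q0: "\<And>t. 0 \<le> Q t"
    and P1: "(P has_sum 1) UNIV" and Q1: "(Q has_sum 1) UNIV"
    and supp: "\<And>t. P t \<noteq> 0 \<Longrightarrow> 0 < Q t"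
    and summable: "(\<lambda>t. P t * ln (P t / Q t)) summable_on UNIV"
  shows "0 \<le> (\<Sum>\<^sub>\<infinity>t. P t * ln (P t / Q t))"
    and "(\<Sum>\<^sub>\<infinity>t. P t * ln (P t / Q t)) = 0 \<Longrightarrow> P = Q"
proof -
  define D where "D t = P t * ln (P t / Q t) - P t + Q t" for t
  have D0: "0 \<le> D t" for t
  proof (cases "P t = 0")
    case True
    then show ?thesis using Q0[of t] by (simp add: D_def)
  next
    case False
    then show ?thesis
      using xlnx_ge_diff[of "P t" "Q t"] P0[of t] supp[of t] by (simp add: D_def)
  qed
  have "((\<lambda>t. P t * ln (P t / Q t) + - P t + Q t)
      has_sum ((\<Sum>\<^sub>\<infinity>t. P t * ln (P t / Q t)) + - 1 + 1)) UNIV"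
    by (intro has_sum_add has_sum_uminusI has_sum_infsum summable P1 Q1)
  then have D_sum: "(D has_sum (\<Sum>\<^sub>\<infinity>t. P t * ln (P t / Q t))) UNIV"
    by (simp add: D_def[abs_def])
  then show "0 \<le> (\<Sum>\<^sub>\<infinity>t. P t * ln (P t / Q t))"
    using has_sum_nonneg D0 by blast
  assume "(\<Sum>\<^sub>\<infinity>t. P t * ln (P t / Q t)) = 0"
  show "P = Q"
  proof
    fix t
    have "sum D {t} \<le> (\<Sum>\<^sub>\<infinity>t. P t * ln (P t / Q t))"
      by (rule finite_sum_le_has_sum[OF D_sum]) (auto simp: D0)
    then have "D t = 0" using D0[of t] \<open>_ = 0\<close> by simp
    show "P t = Q t"
    proof (cases "P t = 0")
      case True
      then show ?thesis using \<open>D t = 0\<close> by (simp add: D_def)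
    next
      case False
      then show ?thesis
        using xlnx_eq_diff_imp_eq[of "P t" "Q t"] \<open>D t = 0\<close> P0[of t] supp[of t]
        by (simp add: D_def)
    qed
  qed
qed

lemma is_channelD:
  assumes "is_channel \<kappa>"
  shows "0 \<le> \<kappa> a t" and "(\<kappa> a has_sum 1) UNIV"
  using assms unfolding is_channel_def by blast+

lemma chan_comp_det_chan: "chan_comp \<kappa> (det_chan f) = (\<lambda>a. \<kappa> (f a))"
  by (intro ext) (simp add: chan_comp_def det_chan_def if_distrib[of "\<lambda>x. _ * x"] cong: if_cong)

lemma has_sum_push:
  fixes \<kappa> :: "'a::finite \<Rightarrow> nat \<Rightarrow> real"
  assumes "is_channel \<kappa>"
  shows "(push \<kappa> r has_sum sum r UNIV) UNIV"
proof -
  have "((\<lambda>t. \<Sum>a\<in>UNIV. \<kappa> a t * r a) has_sum (\<Sum>a\<in>UNIV. 1 * r a)) UNIV"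
    using is_channelD(2)[OF assms] by (intro has_sum_sum has_sum_cmult_left) auto
  then show ?thesis
    by (simp add: push_def[abs_def])
qed

lemma push_nonneg:
  fixes \<kappa> :: "'a::finite \<Rightarrow> nat \<Rightarrow> real"
  assumes "is_channel \<kappa>" "\<And>a. 0 \<le> r a"
  shows "0 \<le> push \<kappa> r t"
  unfolding push_def
  by (intro sum_nonneg mult_nonneg_nonneg) (use is_channelD(1)[OF assms(1)] assms(2) in auto)

lemma channel_mult_le_push:
  fixes \<kappa> :: "'a::finite \<Rightarrow> nat \<Rightarrow> real"
  assumes "is_channel \<kappa>" "\<And>a. 0 \<le> r a"
  shows "\<kappa> a t * r a \<le> push \<kappa> r t"
  unfolding push_def
  by (rule member_le_sum) (use is_channelD(1)[OF assms(1)] assms(2) in auto)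

lemma mutual_info_eq_real:
  fixes p :: "'a::finite \<Rightarrow> real"
  assumes \<kappa>: "is_channel \<kappa>" and p: "\<And>a. 0 < p a"
  shows "(\<lambda>t. \<kappa> a t * ln (\<kappa> a t / push \<kappa> p t)) summable_on UNIV"
    and "mutual_info p \<kappa> = ereal (\<Sum>a\<in>UNIV. p a * (\<Sum>\<^sub>\<infinity>t. \<kappa> a t * ln (\<kappa> a t / push \<kappa> p t)))"
proof -
  have dom: "\<kappa> a t \<le> 1 / p a * push \<kappa> p t" for a t
    using channel_mult_le_push[OF \<kappa>, of p a t] p[of a] less_imp_le[OF p]
    by (simp add: field_simps)
  have supp: "0 < push \<kappa> p t" if "\<kappa> a t \<noteq> 0" for a t
  proof -
    have "0 < \<kappa> a t * p a"
      using that is_channelD(1)[OF \<kappa>, of a t] p[of a] by simp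
    then show ?thesis
      using channel_mult_le_push[OF \<kappa>, of p a t] less_imp_le[OF p] by simp
  qed
  show summable: "(\<lambda>t. \<kappa> a t * ln (\<kappa> a t / push \<kappa> p t)) summable_on UNIV" for a
    using is_channelD[OF \<kappa>] has_sum_push[OF \<kappa>, of p] p[of a] supp dom
      push_nonneg[OF \<kappa>] less_imp_le[OF p]
    by (intro summable_on_kl_if_dominated[where c = "1 / p a"]) (auto intro: has_sum_imp_summable)
  have "KL (\<kappa> a) (push \<kappa> p) = ereal (\<Sum>\<^sub>\<infinity>t. \<kappa> a t * ln (\<kappa> a t / push \<kappa> p t))" for a
    using supp by (intro KL_eq_infsum summable) fastforce
  then show "mutual_info p \<kappa> = ereal (\<Sum>a\<in>UNIV. p a * (\<Sum>\<^sub>\<infinity>t. \<kappa> a t * ln (\<kappa> a t / push \<kappa> p t)))"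
    unfolding mutual_info_def by simp
qed

lemma push_le_mult_push:
  fixes \<kappa> :: "'a::finite \<Rightarrow> nat \<Rightarrow> real"
  assumes "is_channel \<kappa>" and "\<And>a. P a \<le> c * R a"
  shows "push \<kappa> P t \<le> c * push \<kappa> R t"
proof -
  have "\<kappa> a t * P a \<le> \<kappa> a t * (c * R a)" for a
    by (rule mult_left_mono[OF assms(2) is_channelD(1)[OF assms(1)]])
  then have "\<kappa> a t * P a \<le> c * (\<kappa> a t * R a)" for a
    by (simp add: mult.left_commute)
  then show ?thesis
    unfolding push_def sum_distrib_left by (intro sum_mono)
qed

lemma push_pos:
  fixes \<kappa> :: "'a::finite \<Rightarrow> nat \<Rightarrow> real"
  assumes \<kappa>: "is_channel \<kappa>" and R: "\<And>a. 0 < R a" and nonzero: "push \<kappa> P t \<noteq> 0"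
  shows "0 < push \<kappa> R t"
proof -
  obtain a where "\<kappa> a t * P a \<noteq> 0"
    using sum.not_neutral_contains_not_neutral[OF nonzero[unfolded push_def]] by blast
  then have "0 < \<kappa> a t"
    using is_channelD(1)[OF \<kappa>, of a t] by (simp add: less_le)
  then have "0 < \<kappa> a t * R a"
    using R[of a] by simp
  also have "\<dots> \<le> push \<kappa> R t"
    using R by (intro channel_mult_le_push[OF \<kappa>] less_imp_le)
  finally show ?thesis .
qed

lemma KL_push_le:
  fixes \<kappa> :: "'a::finite \<Rightarrow> nat \<Rightarrow> real"
  assumes \<kappa>: "is_channel \<kappa>" and P: "\<And>a. 0 \<le> P a" and R: "\<And>a. 0 < R a"
  shows "KL (push \<kappa> P) (push \<kappa> R) \<le> ereal (\<Sum>a\<in>UNIV. P a * ln (P a / R a))"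
proof -
  have \<kappa>0: "0 \<le> \<kappa> a t" for a t using is_channelD(1)[OF \<kappa>] .
  have R0: "0 \<le> R a" for a using R[of a] by simp
  note supp = push_pos[of \<kappa> R P, OF \<kappa> R]
  define c where "c = (\<Sum>a\<in>UNIV. P a / R a) + 1"
  have "0 \<le> (\<Sum>a\<in>UNIV. P a / R a)"
    using P R0 by (intro sum_nonneg divide_nonneg_nonneg)
  then have "0 < c" unfolding c_def by simp
  have "P a / R a \<le> (\<Sum>a\<in>UNIV. P a / R a)" for a
    by (rule member_le_sum) (use P R0 in \<open>auto intro: divide_nonneg_nonneg\<close>)
  then have "P a / R a \<le> c" for a
    unfolding c_def by (simp add: add_increasing2)
  then have "P a \<le> c * R a" for a
    using R[of a] by (simp add: divide_le_eq)
  then have dom: "push \<kappa> P t \<le> c * push \<kappa> R t" for t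
    by (rule push_le_mult_push[OF \<kappa>])
  have summable: "(\<lambda>t. push \<kappa> P t * ln (push \<kappa> P t / push \<kappa> R t)) summable_on UNIV"
    using has_sum_push[OF \<kappa>] push_nonneg[OF \<kappa>] P R0 supp \<open>0 < c\<close> dom
    by (intro summable_on_kl_if_dominated) (auto intro: has_sum_imp_summable)
  define h where "h t = (\<Sum>a\<in>UNIV. \<kappa> a t * (P a * ln (P a / R a)))" for t
  have h_sum: "(h has_sum (\<Sum>a\<in>UNIV. 1 * (P a * ln (P a / R a)))) UNIV"
    unfolding h_def[abs_def] using is_channelD(2)[OF \<kappa>]
    by (intro has_sum_sum has_sum_cmult_left) auto
  have log_sum: "push \<kappa> P t * ln (push \<kappa> P t / push \<kappa> R t) \<le> h t" for t
  proof -
    have "push \<kappa> P t * ln (push \<kappa> P t / push \<kappa> R t)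
        \<le> (\<Sum>a\<in>UNIV. (\<kappa> a t * P a) * ln ((\<kappa> a t * P a) / (\<kappa> a t * R a)))"
      unfolding push_def
    proof (rule log_sum_inequality)
      fix a
      assume "\<kappa> a t * P a \<noteq> 0"
      then have "0 < \<kappa> a t"
        using \<kappa>0[of a t] by (simp add: less_le)
      then show "0 < \<kappa> a t * R a"
        using R[of a] by simp
    qed (use \<kappa>0 P R0 in auto)
    also have "\<dots> = h t"
      unfolding h_def by (intro sum.cong refl) (simp add: mult.assoc)
    finally show ?thesis .
  qed
  have "(\<Sum>\<^sub>\<infinity>t. push \<kappa> P t * ln (push \<kappa> P t / push \<kappa> R t)) \<le> (\<Sum>\<^sub>\<infinity>t. h t)"
    by (rule infsum_mono[OF summable has_sum_imp_summable[OF h_sum] log_sum])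
  also have "\<dots> = (\<Sum>a\<in>UNIV. P a * ln (P a / R a))"
    using h_sum by (simp add: has_sum_iff)
  finally show ?thesis
    using supp summable by (subst KL_eq_infsum) fastforce+
qed

lemma gibbs_inequality_channels:
  assumes \<kappa>: "is_channel \<kappa>" and \<mu>: "is_channel \<mu>"
    and "0 < c" and dom: "\<And>t. \<kappa> a t \<le> c * \<mu> a t"
  shows "(\<lambda>t. \<kappa> a t * ln (\<kappa> a t / \<mu> a t)) summable_on UNIV"
    and "0 \<le> (\<Sum>\<^sub>\<infinity>t. \<kappa> a t * ln (\<kappa> a t / \<mu> a t))"
    and "(\<Sum>\<^sub>\<infinity>t. \<kappa> a t * ln (\<kappa> a t / \<mu> a t)) = 0 \<Longrightarrow> \<kappa> a = \<mu> a"
proof -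
  have supp: "0 < \<mu> a t" if "\<kappa> a t \<noteq> 0" for t
  proof -
    have "0 < c * \<mu> a t"
      using that dom[of t] is_channelD(1)[OF \<kappa>, of a t] by linarith
    then show ?thesis
      using \<open>0 < c\<close> by (simp add: zero_less_mult_iff)
  qed
  note rows = is_channelD(1)[OF \<kappa>] is_channelD(1)[OF \<mu>]
    is_channelD(2)[OF \<kappa>] is_channelD(2)[OF \<mu>]
  show summable: "(\<lambda>t. \<kappa> a t * ln (\<kappa> a t / \<mu> a t)) summable_on UNIV"
    using rows has_sum_imp_summable[OF is_channelD(2)[OF \<kappa>]]
      has_sum_imp_summable[OF is_channelD(2)[OF \<mu>]] supp \<open>0 < c\<close> dom
    by (intro summable_on_kl_if_dominated[where c = c])
  show "0 \<le> (\<Sum>\<^sub>\<infinity>t. \<kappa> a t * ln (\<kappa> a t / \<mu> a t))"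
    and "(\<Sum>\<^sub>\<infinity>t. \<kappa> a t * ln (\<kappa> a t / \<mu> a t)) = 0 \<Longrightarrow> \<kappa> a = \<mu> a"
    using gibbs_inequality[OF rows supp summable] by blast+
qed

lemma mutual_info_pythagorean:
  fixes p :: "'a::finite \<Rightarrow> real"
  assumes \<kappa>: "is_channel \<kappa>" and \<mu>: "is_channel \<mu>" and p: "\<And>a. 0 < p a"
    and c: "\<And>a. 0 < c a" and dom: "\<And>a t. \<kappa> a t \<le> c a * \<mu> a t"
    and push_eq: "push \<mu> p = push \<kappa> p"
    and orth: "\<And>t. (\<Sum>a\<in>UNIV. p a * \<kappa> a t * ln (\<mu> a t / push \<kappa> p t))
                  = (\<Sum>a\<in>UNIV. p a * \<mu> a t * ln (\<mu> a t / push \<kappa> p t))"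
  shows "mutual_info p \<kappa>
    = mutual_info p \<mu> + ereal (\<Sum>a\<in>UNIV. p a * (\<Sum>\<^sub>\<infinity>t. \<kappa> a t * ln (\<kappa> a t / \<mu> a t)))"
proof -
  define m where "m = push \<kappa> p"
  define f1 where "f1 a t = \<kappa> a t * ln (\<kappa> a t / m t)" for a t
  define f2 where "f2 a t = \<mu> a t * ln (\<mu> a t / m t)" for a t
  define f3 where "f3 a t = \<kappa> a t * ln (\<kappa> a t / \<mu> a t)" for a t
  have \<kappa>0: "0 \<le> \<kappa> a t" for a t
    using is_channelD(1)[OF \<kappa>] .
  have supp: "0 < \<mu> a t" if "\<kappa> a t \<noteq> 0" for a t
  proof -
    have "0 < c a * \<mu> a t"
      using that dom[of a t] \<kappa>0[of a t] by linarith
    then show ?thesis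
      using c[of a] by (simp add: zero_less_mult_iff)
  qed
  have summable1: "f1 a summable_on UNIV" for a
    unfolding f1_def m_def by (rule mutual_info_eq_real(1)[of \<kappa> p, OF \<kappa> p])
  have summable2: "f2 a summable_on UNIV" for a
    unfolding f2_def m_def using mutual_info_eq_real(1)[of \<mu> p, OF \<mu> p] by (simp add: push_eq)
  have summable3: "f3 a summable_on UNIV" for a
    unfolding f3_def by (rule gibbs_inequality_channels(1)[OF \<kappa> \<mu> c dom])
  have weighted: "((\<lambda>t. \<Sum>a\<in>UNIV. p a * f a t) has_sum (\<Sum>a\<in>UNIV. p a * (\<Sum>\<^sub>\<infinity>t. f a t))) UNIV"
    if "\<And>a. f a summable_on UNIV" for f
    using that by (intro has_sum_sum has_sum_cmult_right has_sum_infsum) auto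
  have split: "f1 a t = f3 a t + \<kappa> a t * ln (\<mu> a t / m t)" for a t
  proof (cases "\<kappa> a t = 0")
    case False
    have "0 < \<kappa> a t * p a" using False \<kappa>0[of a t] p[of a] by simp
    then have "0 < m t"
      unfolding m_def using channel_mult_le_push[OF \<kappa> less_imp_le[OF p]] by (meson order_less_le_trans)
    then show ?thesis
      using False \<kappa>0[of a t] supp[OF False]
      by (simp add: f1_def f3_def ln_div distrib_left[symmetric])
  qed (simp add: f1_def f3_def)
  have "(\<Sum>a\<in>UNIV. p a * f1 a t) = (\<Sum>a\<in>UNIV. p a * f2 a t) + (\<Sum>a\<in>UNIV. p a * f3 a t)" for t
    using orth[of t] unfolding split f2_def m_def
    by (simp add: distrib_left sum.distrib mult.assoc)
  then have "((\<lambda>t. \<Sum>a\<in>UNIV. p a * f1 a t) has_sum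
      (\<Sum>a\<in>UNIV. p a * (\<Sum>\<^sub>\<infinity>t. f2 a t)) + (\<Sum>a\<in>UNIV. p a * (\<Sum>\<^sub>\<infinity>t. f3 a t))) UNIV"
    using has_sum_add[OF weighted[OF summable2] weighted[OF summable3]] by simp
  then have "(\<Sum>a\<in>UNIV. p a * (\<Sum>\<^sub>\<infinity>t. f1 a t))
      = (\<Sum>a\<in>UNIV. p a * (\<Sum>\<^sub>\<infinity>t. f2 a t)) + (\<Sum>a\<in>UNIV. p a * (\<Sum>\<^sub>\<infinity>t. f3 a t))"
    by (rule has_sum_unique[OF weighted[OF summable1]])
  then show ?thesis
    using mutual_info_eq_real(2)[of \<kappa> p, OF \<kappa> p] mutual_info_eq_real(2)[of \<mu> p, OF \<mu> p]
    unfolding f1_def f2_def f3_def m_def push_eq by simp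
qed

lemma sum_shift_periodic:
  fixes f :: "nat \<Rightarrow> 'b::ab_group_add"
  assumes "f N = f 0"
  shows "(\<Sum>i<N. f (Suc i)) = (\<Sum>i<N. f i)"
  using sum.lessThan_Suc_shift[of f N] assms by (simp add: algebra_simps)

lemma sum_rev_periodic:
  fixes f :: "nat \<Rightarrow> 'b::ab_group_add"
  assumes "f N = f 0"
  shows "(\<Sum>i<N. f (N - i)) = (\<Sum>i<N. f i)"
proof -
  have "(\<Sum>i<N. f (N - i)) = (\<Sum>i<N. f (Suc (N - Suc i)))"
    by (intro sum.cong) (auto simp: Suc_diff_Suc)
  also have "\<dots> = (\<Sum>i<N. f (Suc i))"
    using sum.nat_diff_reindex[of "\<lambda>i. f (Suc i)" N] by simp
  finally show ?thesis
    using sum_shift_periodic[OF assms] by simp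
qed

lemma funpow_invariant:
  assumes "\<And>a. h (g a) = h a"
  shows "h ((g ^^ i) a) = h a"
  using assms by (induction i) auto

lemma bij_funpow_period:
  fixes g :: "'a::finite \<Rightarrow> 'a"
  assumes "bij g"
  obtains N where "0 < N" "g ^^ N = id"
proof -
  have "\<not> inj (\<lambda>n::nat. g ^^ n)"
    using finite_imageD[of "\<lambda>n::nat. g ^^ n" UNIV] infinite_UNIV_nat by auto
  then obtain i j :: nat where "i < j" "g ^^ i = g ^^ j"
    unfolding inj_def by (metis linorder_neqE_nat)
  have "g ^^ (j - i) = id"
  proof
    fix x
    have "(g ^^ i) ((g ^^ (j - i)) x) = (g ^^ (i + (j - i))) x"
      by (simp only: funpow_add o_apply)
    also have "\<dots> = (g ^^ j) x"
      using \<open>i < j\<close> by simp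
    also have "\<dots> = (g ^^ i) x"
      using \<open>g ^^ i = g ^^ j\<close> by simp
    finally show "(g ^^ (j - i)) x = id x"
      using inj_fn[OF bij_is_inj[OF assms], of i] by (simp add: inj_eq)
  qed
  then show ?thesis
    using that[of "j - i"] \<open>i < j\<close> by simp
qed

locale periodic_map =
  fixes g :: "'a::finite \<Rightarrow> 'a" and N :: nat
  assumes funpow_period: "g ^^ N = id" and period_pos: "0 < N"
begin

lemma bij: "bij g"
proof (rule o_bij)
  have period: "g ^^ Suc (N - 1) = id"
    using funpow_period period_pos by simp
  show "g ^^ (N - 1) \<circ> g = id"
    using period by (simp only: funpow_Suc_right)
  show "g \<circ> g ^^ (N - 1) = id"
    using period by (simp only: funpow.simps(2))
qed

definition orbit_sum :: "('a \<Rightarrow> real) \<Rightarrow> 'a \<Rightarrow> real" where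
  "orbit_sum f a = (\<Sum>i<N. f ((g ^^ i) a))"

lemma orbit_sum_apply: "orbit_sum f (g a) = orbit_sum f a"
proof -
  have "orbit_sum f (g a) = (\<Sum>i<N. f ((g ^^ Suc i) a))"
    unfolding orbit_sum_def by (simp add: funpow_Suc_right del: funpow.simps)
  also have "\<dots> = orbit_sum f a"
    unfolding orbit_sum_def by (rule sum_shift_periodic) (simp add: funpow_period)
  finally show ?thesis .
qed

lemma orbit_sum_mult_invariant:
  assumes "\<And>a. h (g a) = h a"
  shows "orbit_sum (\<lambda>b. f b * h b) a = orbit_sum f a * h a"
  unfolding orbit_sum_def by (simp add: funpow_invariant[of h g, OF assms] sum_distrib_right)

lemma orbit_sum_pos: "(\<And>a. 0 < f a) \<Longrightarrow> 0 < orbit_sum f a"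
  unfolding orbit_sum_def using period_pos by (intro sum_pos) auto

lemma orbit_sum_nonneg: "(\<And>a. 0 \<le> f a) \<Longrightarrow> 0 \<le> orbit_sum f a"
  unfolding orbit_sum_def by (intro sum_nonneg) auto

lemma le_orbit_sum: "(\<And>a. 0 \<le> f a) \<Longrightarrow> f a \<le> orbit_sum f a"
  unfolding orbit_sum_def using period_pos
  by (metis (no_types, lifting) funpow_0 lessThan_iff member_le_sum finite_lessThan)

lemma sum_mult_orbit_sum: "(\<Sum>a\<in>UNIV. \<phi> a * orbit_sum \<psi> a) = (\<Sum>a\<in>UNIV. orbit_sum \<phi> a * \<psi> a)"
proof -
  have shift: "(\<Sum>a\<in>UNIV. \<phi> a * \<psi> ((g ^^ i) a)) = (\<Sum>b\<in>UNIV. \<phi> ((g ^^ (N - i)) b) * \<psi> b)"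
    if "i < N" for i
  proof -
    have "bij_betw (g ^^ (N - i)) UNIV UNIV"
      using bij bij_fn by auto
    then have "(\<Sum>b\<in>UNIV. \<phi> ((g ^^ (N - i)) b) * \<psi> ((g ^^ i) ((g ^^ (N - i)) b)))
        = (\<Sum>a\<in>UNIV. \<phi> a * \<psi> ((g ^^ i) a))"
      by (rule sum.reindex_bij_betw)
    moreover have "(g ^^ i) ((g ^^ (N - i)) b) = b" for b
    proof -
      have "(g ^^ i) ((g ^^ (N - i)) b) = (g ^^ (i + (N - i))) b"
        by (simp only: funpow_add o_apply)
      then show ?thesis
        using that funpow_period by simp
    qed
    ultimately show ?thesis
      by simp
  qed
  have rev: "(\<Sum>i<N. \<phi> ((g ^^ (N - i)) b)) = orbit_sum \<phi> b" for b
    unfolding orbit_sum_def by (rule sum_rev_periodic) (simp add: funpow_period)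
  have "(\<Sum>a\<in>UNIV. \<phi> a * orbit_sum \<psi> a) = (\<Sum>i<N. \<Sum>a\<in>UNIV. \<phi> a * \<psi> ((g ^^ i) a))"
    unfolding orbit_sum_def sum_distrib_left by (rule sum.swap)
  also have "\<dots> = (\<Sum>i<N. \<Sum>b\<in>UNIV. \<phi> ((g ^^ (N - i)) b) * \<psi> b)"
    by (intro sum.cong refl shift) simp
  also have "\<dots> = (\<Sum>b\<in>UNIV. (\<Sum>i<N. \<phi> ((g ^^ (N - i)) b)) * \<psi> b)"
    unfolding sum_distrib_right by (rule sum.swap)
  also have "\<dots> = (\<Sum>b\<in>UNIV. orbit_sum \<phi> b * \<psi> b)"
    by (simp only: rev)
  finally show ?thesis .
qed

definition orbit_avg :: "('a \<Rightarrow> real) \<Rightarrow> ('a \<Rightarrow> nat \<Rightarrow> real) \<Rightarrow> 'a \<Rightarrow> nat \<Rightarrow> real" where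
  "orbit_avg p \<kappa> a t = orbit_sum (\<lambda>b. p b * \<kappa> b t) a / orbit_sum p a"

definition orbit_reweight :: "('a \<Rightarrow> real) \<Rightarrow> ('a \<Rightarrow> real) \<Rightarrow> 'a \<Rightarrow> real" where
  "orbit_reweight p r a = p a * orbit_sum r a / orbit_sum p a"

lemma orbit_avg_apply: "orbit_avg p \<kappa> (g a) = orbit_avg p \<kappa> a"
  by (simp add: fun_eq_iff orbit_avg_def orbit_sum_apply)

lemma sum_mult_orbit_avg:
  "(\<Sum>a\<in>UNIV. \<phi> a * orbit_avg p \<kappa> a t) = (\<Sum>a\<in>UNIV. \<kappa> a t * orbit_reweight p \<phi> a)"
proof -
  have inv: "inverse (orbit_sum p (g a)) = inverse (orbit_sum p a)" for a
    by (simp add: orbit_sum_apply)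
  have "(\<Sum>a\<in>UNIV. \<phi> a * orbit_avg p \<kappa> a t)
      = (\<Sum>a\<in>UNIV. (\<phi> a * inverse (orbit_sum p a)) * orbit_sum (\<lambda>b. p b * \<kappa> b t) a)"
    by (simp add: orbit_avg_def divide_inverse mult_ac)
  also have "\<dots> = (\<Sum>a\<in>UNIV. orbit_sum (\<lambda>b. \<phi> b * inverse (orbit_sum p b)) a * (p a * \<kappa> a t))"
    by (rule sum_mult_orbit_sum)
  also have "\<dots> = (\<Sum>a\<in>UNIV. \<kappa> a t * orbit_reweight p \<phi> a)"
    by (simp add: orbit_sum_mult_invariant[of "\<lambda>b. inverse (orbit_sum p b)", OF inv]
        orbit_reweight_def divide_inverse mult_ac)
  finally show ?thesis .
qed

lemma push_orbit_avg: "push (orbit_avg p \<kappa>) r = push \<kappa> (orbit_reweight p r)"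
proof
  fix t
  have "push (orbit_avg p \<kappa>) r t = (\<Sum>a\<in>UNIV. r a * orbit_avg p \<kappa> a t)"
    unfolding push_def by (simp add: mult.commute)
  then show "push (orbit_avg p \<kappa>) r t = push \<kappa> (orbit_reweight p r) t"
    by (simp add: sum_mult_orbit_avg push_def)
qed

context
  fixes p :: "'a \<Rightarrow> real"
  assumes p_pos: "\<And>a. 0 < p a"
begin

lemma orbit_sum_weight_pos: "0 < orbit_sum p a"
  using orbit_sum_pos[of p a] p_pos by blast

lemma orbit_reweight_self: "orbit_reweight p p = p"
  using orbit_sum_weight_pos by (simp add: fun_eq_iff orbit_reweight_def less_imp_neq[symmetric])

lemma sum_orbit_reweight: "sum (orbit_reweight p r) UNIV = sum r UNIV"
proof -
  have inv: "inverse (orbit_sum p (g a)) = inverse (orbit_sum p a)" for a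
    by (simp add: orbit_sum_apply)
  have "sum (orbit_reweight p r) UNIV = (\<Sum>a\<in>UNIV. (p a * inverse (orbit_sum p a)) * orbit_sum r a)"
    by (simp add: orbit_reweight_def divide_inverse mult_ac)
  also have "\<dots> = (\<Sum>a\<in>UNIV. orbit_sum (\<lambda>b. p b * inverse (orbit_sum p b)) a * r a)"
    by (rule sum_mult_orbit_sum)
  also have "\<dots> = sum r UNIV"
    using orbit_sum_weight_pos
    by (simp add: orbit_sum_mult_invariant[of "\<lambda>b. inverse (orbit_sum p b)", OF inv]
        less_imp_neq[symmetric])
  finally show ?thesis .
qed

lemma orbit_reweight_nonneg: "(\<And>a. 0 \<le> r a) \<Longrightarrow> 0 \<le> orbit_reweight p r a"
  unfolding orbit_reweight_def using p_pos orbit_sum_weight_pos orbit_sum_nonneg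
  by (simp add: less_imp_le)

lemma orbit_avg_is_channel:
  assumes \<kappa>: "is_channel \<kappa>"
  shows "is_channel (orbit_avg p \<kappa>)"
  unfolding is_channel_def
proof safe
  fix a t
  show "0 \<le> orbit_avg p \<kappa> a t"
    unfolding orbit_avg_def using is_channelD(1)[OF \<kappa>] p_pos orbit_sum_weight_pos
    by (intro divide_nonneg_pos orbit_sum_nonneg) (simp_all add: less_imp_le)
next
  fix a
  define w where "w i = p ((g ^^ i) a) / orbit_sum p a" for i
  have "((\<lambda>t. \<Sum>i<N. w i * \<kappa> ((g ^^ i) a) t) has_sum (\<Sum>i<N. w i * 1)) UNIV"
    using is_channelD(2)[OF \<kappa>] by (intro has_sum_sum has_sum_cmult_right) auto
  moreover have "(\<Sum>i<N. w i) = 1"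
    using orbit_sum_weight_pos[of a]
    by (simp add: w_def orbit_sum_def flip: sum_divide_distrib)
  moreover have "orbit_avg p \<kappa> a = (\<lambda>t. \<Sum>i<N. w i * \<kappa> ((g ^^ i) a) t)"
    by (simp add: fun_eq_iff orbit_avg_def orbit_sum_def w_def sum_divide_distrib)
  ultimately show "(orbit_avg p \<kappa> a has_sum 1) UNIV"
    by simp
qed

lemma sum_mult_orbit_avg_invariant:
  assumes "\<And>a. h (g a) = h a"
  shows "(\<Sum>a\<in>UNIV. p a * orbit_avg p \<kappa> a t * h a) = (\<Sum>a\<in>UNIV. p a * \<kappa> a t * h a)"
proof -
  have "orbit_reweight p (\<lambda>b. p b * h b) a = p a * h a" for a
    using orbit_sum_weight_pos[of a]
    by (simp add: orbit_reweight_def orbit_sum_mult_invariant[of h, OF assms])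
  then show ?thesis
    using sum_mult_orbit_avg[of "\<lambda>b. p b * h b" p \<kappa> t] by (simp add: mult_ac)
qed

lemma mult_le_orbit_avg:
  assumes "is_channel \<kappa>"
  shows "p a * \<kappa> a t \<le> orbit_sum p a * orbit_avg p \<kappa> a t"
  using le_orbit_sum[of "\<lambda>b. p b * \<kappa> b t" a] is_channelD(1)[OF assms] p_pos
    orbit_sum_weight_pos[of a]
  by (simp add: orbit_avg_def less_imp_le)

lemma orbit_avg_eq_if_mutual_info_le:
  assumes \<kappa>: "is_channel \<kappa>" and le: "mutual_info p \<kappa> \<le> mutual_info p (orbit_avg p \<kappa>)"
  shows "orbit_avg p \<kappa> = \<kappa>"
proof -
  define \<mu> where "\<mu> = orbit_avg p \<kappa>"
  have \<mu>: "is_channel \<mu>"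
    unfolding \<mu>_def by (rule orbit_avg_is_channel[OF \<kappa>])
  have c: "0 < orbit_sum p a / p a" for a
    using orbit_sum_weight_pos[of a] p_pos[of a] by simp
  have dom: "\<kappa> a t \<le> orbit_sum p a / p a * \<mu> a t" for a t
    using mult_le_orbit_avg[OF \<kappa>, of a t] p_pos[of a] unfolding \<mu>_def by (simp add: field_simps)
  have push_eq: "push \<mu> p = push \<kappa> p"
    unfolding \<mu>_def push_orbit_avg orbit_reweight_self ..
  have orth: "(\<Sum>a\<in>UNIV. p a * \<kappa> a t * ln (\<mu> a t / push \<kappa> p t))
      = (\<Sum>a\<in>UNIV. p a * \<mu> a t * ln (\<mu> a t / push \<kappa> p t))" for t
    unfolding \<mu>_def by (rule sum_mult_orbit_avg_invariant[symmetric]) (simp add: orbit_avg_apply)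
  define K where "K a = (\<Sum>\<^sub>\<infinity>t. \<kappa> a t * ln (\<kappa> a t / \<mu> a t))" for a
  have K_nonneg: "0 \<le> p a * K a" for a
    unfolding K_def using gibbs_inequality_channels(2)[OF \<kappa> \<mu> c dom] p_pos[of a] by simp
  obtain I where I: "mutual_info p \<mu> = ereal I"
    using mutual_info_eq_real(2)[of \<mu> p, OF \<mu> p_pos] by blast
  have "mutual_info p \<kappa> = ereal (I + (\<Sum>a\<in>UNIV. p a * K a))"
    unfolding K_def using mutual_info_pythagorean[OF \<kappa> \<mu> p_pos c dom push_eq orth] I by simp
  then have "(\<Sum>a\<in>UNIV. p a * K a) = 0"
    using le I sum_nonneg[of UNIV "\<lambda>a. p a * K a"] K_nonneg unfolding \<mu>_def[symmetric]
    by fastforce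
  then have "\<forall>a\<in>UNIV. p a * K a = 0"
    by (simp add: sum_nonneg_eq_0_iff K_nonneg)
  then have "K a = 0" for a
    using p_pos[of a] by (metis UNIV_I less_irrefl mult_eq_0_iff)
  then have "\<kappa> a = \<mu> a" for a
    unfolding K_def by (rule gibbs_inequality_channels(3)[OF \<kappa> \<mu> c dom])
  then show ?thesis
    unfolding \<mu>_def by (simp add: fun_eq_iff)
qed

end

end

lemma sum_UNIV_prod:
  "(\<Sum>a\<in>(UNIV :: ('x::finite \<times> 'y::finite) set). f a) = (\<Sum>x\<in>UNIV. \<Sum>y\<in>UNIV. f (x, y))"
  by (simp add: sum.cartesian_product' flip: UNIV_Times_UNIV)

lemma mem_E_ce_iff:
  fixes f :: "'x::finite \<times> 'y::finite \<Rightarrow> real"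
  shows "f \<in> E_ce \<longleftrightarrow> (\<forall>x y y'. f (x, y) = f (x, y')) \<and> (\<forall>a. 0 \<le> f a) \<and> sum f UNIV = 1"
  (is "_ \<longleftrightarrow> ?rhs")
proof
  assume "f \<in> E_ce"
  then obtain r where r: "r \<in> prob_simplex" and f: "f = (\<lambda>(x, y). r x / real CARD('y))"
    unfolding E_ce_def by auto
  have "f (x, y) = f (x, y')" for x y y'
    unfolding f by simp
  moreover have "0 \<le> f a" for a
    using r unfolding f prob_simplex_def by (cases a) simp
  moreover have "sum f UNIV = sum r UNIV"
    unfolding f sum_UNIV_prod by simp
  ultimately show ?rhs
    using r unfolding prob_simplex_def by simp
next
  assume ?rhs
  then have const: "f (x, y) = f (x, y')" and nonneg: "0 \<le> f a" and sum1: "sum f UNIV = 1"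
    for x y y' a by blast+
  define r where "r x = real CARD('y) * f (x, undefined)" for x
  have "f (x, y) = r x / real CARD('y)" for x y
    using const[of x y undefined] by (simp add: r_def)
  then have f: "f = (\<lambda>(x, y). r x / real CARD('y))"
    by (simp add: fun_eq_iff)
  have "sum r UNIV = sum f UNIV"
    unfolding f sum_UNIV_prod by simp
  moreover have "0 \<le> r x" for x
    unfolding r_def using nonneg by simp
  ultimately have "r \<in> prob_simplex"
    using sum1 unfolding prob_simplex_def by simp
  then show "f \<in> E_ce"
    unfolding E_ce_def f by (intro CollectI exI[of _ r] conjI refl)
qed

lemma closed_E_ce: "closed (E_ce :: ('x::finite \<times> 'y::finite \<Rightarrow> real) set)"
proof -
  have "E_ce = (\<Inter>x. \<Inter>y. \<Inter>y'. {f :: 'x \<times> 'y \<Rightarrow> real. f (x, y) = f (x, y')})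
      \<inter> (\<Inter>a. {f. 0 \<le> f a}) \<inter> {f. sum f UNIV = 1}"
    by (auto simp: mem_E_ce_iff)
  also have "closed \<dots>"
    by (intro closed_Int closed_INT ballI closed_Collect_eq closed_Collect_le continuous_on_sum
        continuous_on_const continuous_on_product_coordinates)
  finally show ?thesis .
qed

lemma closure_E_ce: "closure E_ce = E_ce"
  by (rule closure_closed[OF closed_E_ce])

definition fst_marginal :: "('x \<times> 'y::finite \<Rightarrow> real) \<Rightarrow> 'x \<Rightarrow> real" where
  "fst_marginal p x = (\<Sum>y\<in>UNIV. p (x, y))"

definition E_ce_proj :: "('x \<times> 'y::finite \<Rightarrow> real) \<Rightarrow> 'x \<times> 'y \<Rightarrow> real" where
  "E_ce_proj p = (\<lambda>(x, y). fst_marginal p x / real CARD('y))"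

lemma full_support_pos: "full_support p \<Longrightarrow> 0 < p a"
  unfolding full_support_def by blast

lemma fst_marginal_pos: "full_support p \<Longrightarrow> 0 < fst_marginal p x"
  unfolding fst_marginal_def full_support_def by (intro sum_pos) auto

lemma E_ce_proj_pos: "full_support p \<Longrightarrow> 0 < E_ce_proj p a"
  by (cases a) (simp add: E_ce_proj_def fst_marginal_pos)

lemma cond_prob_eq_fst_marginal: "cond_prob p x y = p (x, y) / fst_marginal p x"
  unfolding cond_prob_def fst_marginal_def ..

lemma cond_prob_eq_E_ce_proj:
  fixes p :: "'x \<times> 'y::finite \<Rightarrow> real"
  shows "cond_prob p x y = p (x, y) / E_ce_proj p (x, y) / real CARD('y)"
  by (simp add: cond_prob_eq_fst_marginal E_ce_proj_def)

lemma E_ce_proj_mem_E_ce: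
  fixes p :: "'x::finite \<times> 'y::finite \<Rightarrow> real"
  assumes "full_support p"
  shows "E_ce_proj p \<in> E_ce"
proof -
  have "sum (E_ce_proj p) UNIV = sum p UNIV"
    unfolding sum_UNIV_prod by (simp add: E_ce_proj_def fst_marginal_def)
  then show ?thesis
    using assms E_ce_proj_pos[OF assms]
    unfolding mem_E_ce_iff full_support_def prob_simplex_def
    by (auto simp: E_ce_proj_def less_imp_le)
qed

lemma KL_E_ce_proj_le:
  fixes p :: "'x::finite \<times> 'y::finite \<Rightarrow> real"
  assumes full: "full_support p" and "r \<in> E_ce"
  shows "KL p (E_ce_proj p) \<le> KL p r"
proof (cases "\<forall>a. 0 < r a")
  case False
  then obtain a where "\<not> 0 < r a" by blast
  moreover have "0 \<le> r a"
    using \<open>r \<in> E_ce\<close> unfolding mem_E_ce_iff by blast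
  ultimately have "r a = 0" by simp
  moreover have "0 < p a"
    using full unfolding full_support_def by blast
  ultimately show ?thesis
    using KL_finite_eq_infinity[of p a r] by simp
next
  case True
  define q where "q = E_ce_proj p"
  define r' where "r' x = r (x, undefined)" for x
  have p: "0 < p a" for a using full unfolding full_support_def by blast
  have q: "0 < q a" for a unfolding q_def using E_ce_proj_pos[OF full] .
  have r_eq: "r (x, y) = r' x" for x y
    using \<open>r \<in> E_ce\<close> unfolding mem_E_ce_iff r'_def by blast
  have r_pos: "0 < r a" for a
    using True by blast
  define w where "w a = p a * r a / q a" for a
  have w_pos: "0 < w a" for a
    unfolding w_def using p[of a] q[of a] r_pos[of a] by simp
  have "(\<Sum>y\<in>UNIV. w (x, y)) = real CARD('y) * r' x" for x
  proof -
    have "(\<Sum>y\<in>UNIV. w (x, y)) = (\<Sum>y\<in>UNIV. p (x, y)) * (real CARD('y) * r' x / fst_marginal p x)"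
      unfolding sum_distrib_right
      by (intro sum.cong refl) (simp add: w_def q_def E_ce_proj_def r_eq mult_ac)
    then show ?thesis
      using fst_marginal_pos[OF full, of x] by (simp add: fst_marginal_def[symmetric])
  qed
  then have "sum w UNIV = sum r UNIV"
    unfolding sum_UNIV_prod by (simp add: r_eq)
  then have w_sum: "sum w UNIV = sum p UNIV"
    using \<open>r \<in> E_ce\<close> full unfolding mem_E_ce_iff full_support_def prob_simplex_def by simp
  have "(\<Sum>a\<in>UNIV. p a - w a) \<le> (\<Sum>a\<in>UNIV. p a * ln (p a / w a))"
    by (intro sum_mono xlnx_ge_diff p w_pos)
  moreover have "p a * ln (p a / w a) = p a * ln (p a / r a) - p a * ln (p a / q a)" for a
    unfolding w_def using p[of a] q[of a] r_pos[of a] by (simp add: ln_div ln_mult algebra_simps)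
  ultimately have "(\<Sum>a\<in>UNIV. p a * ln (p a / q a)) \<le> (\<Sum>a\<in>UNIV. p a * ln (p a / r a))"
    using w_sum by (simp add: sum_subtractf)
  then show ?thesis
    unfolding q_def using KL_finite[where Q = "E_ce_proj p", OF E_ce_proj_pos[OF full]] KL_finite[where P = p and Q = r, OF r_pos] by simp
qed

lemma D_fam_E_ce:
  assumes "full_support p"
  shows "D_fam p E_ce = KL p (E_ce_proj p)"
  unfolding D_fam_def closure_E_ce
  by (intro antisym INF_lower INF_greatest KL_E_ce_proj_le E_ce_proj_mem_E_ce assms)

lemma funpow_map_prod:
  fixes f :: "'a \<Rightarrow> 'a" and g :: "'b \<Rightarrow> 'b"
  shows "(map_prod f g ^^ n) (x, y) = ((f ^^ n) x, (g ^^ n) y)"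
  by (induction n) simp_all

lemma bij_map_prod: "bij f \<Longrightarrow> bij g \<Longrightarrow> bij (map_prod f g)"
  using bij_betw_map_prod[of f UNIV UNIV g UNIV UNIV] by simp

context
  fixes p :: "'x::finite \<times> 'y::finite \<Rightarrow> real" and \<sigma> :: "'x \<Rightarrow> 'x" and \<tau> :: "'y \<Rightarrow> 'y"
    and N :: nat
  assumes full: "full_support p" and G: "(\<sigma>, \<tau>) \<in> G_ce p"
    and period: "periodic_map (map_prod \<sigma> \<tau>) N"
begin

interpretation periodic_map "map_prod \<sigma> \<tau>" N
  by (rule period)

lemma orbit_reweight_mem_E_ce:
  assumes "r \<in> E_ce"
  shows "orbit_reweight p r \<in> E_ce"
proof -
  have cond_inv: "cond_prob p ((\<sigma> ^^ i) x) ((\<tau> ^^ i) y) = cond_prob p x y" for i x y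
    using G by (induction i) (simp_all add: G_ce_def)
  have factor: "p (x, y) = fst_marginal p x * cond_prob p x y" for x y
    using fst_marginal_pos[OF full, of x] by (simp add: cond_prob_eq_fst_marginal)
  have cond_pos: "0 < cond_prob p x y" for x y
    using full_support_pos[OF full, of "(x, y)"] fst_marginal_pos[OF full, of x]
    by (simp add: cond_prob_eq_fst_marginal)
  \<comment> \<open>Since p(y|x) is constant along orbits, it cancels from p / orbit_sum p.\<close>
  have orbit_p: "orbit_sum p (x, y) = cond_prob p x y * (\<Sum>i<N. fst_marginal p ((\<sigma> ^^ i) x))" for x y
    unfolding orbit_sum_def funpow_map_prod
    by (simp add: factor cond_inv sum_distrib_left mult.commute)
  define s where "s x = orbit_sum r (x, undefined)" for x
  have orbit_r: "orbit_sum r (x, y) = s x" for x y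
    using \<open>r \<in> E_ce\<close> unfolding s_def orbit_sum_def funpow_map_prod mem_E_ce_iff
    by (intro sum.cong refl) blast
  have "orbit_reweight p r (x, y)
      = fst_marginal p x * s x / (\<Sum>i<N. fst_marginal p ((\<sigma> ^^ i) x))" for x y
    using cond_pos[of x y] by (simp add: orbit_reweight_def orbit_p orbit_r factor)
  moreover have "0 \<le> orbit_reweight p r a" for a
    using \<open>r \<in> E_ce\<close> unfolding mem_E_ce_iff
    by (intro orbit_reweight_nonneg full_support_pos[OF full]) blast
  moreover have "sum (orbit_reweight p r) UNIV = 1"
    using \<open>r \<in> E_ce\<close> unfolding mem_E_ce_iff
    by (simp add: sum_orbit_reweight[of p r, OF full_support_pos[OF full]])
  ultimately show ?thesis
    unfolding mem_E_ce_iff by simp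
qed

lemma D_push_fam_orbit_avg: "D_push_fam \<kappa> p E_ce \<le> D_push_fam (orbit_avg p \<kappa>) p E_ce"
  unfolding D_push_fam_def closure_E_ce push_orbit_avg orbit_reweight_self[of p, OF full_support_pos[OF full]]
  by (rule INF_mono) (use orbit_reweight_mem_E_ce in blast)

end

theorem DIB_ce_invariant:
  fixes p :: "'x::finite \<times> 'y::finite \<Rightarrow> real"
  assumes full: "full_support p" and G: "(\<sigma>, \<tau>) \<in> G_ce p" and \<kappa>: "\<kappa> \<in> DIB_ce p lam"
  shows "\<kappa> (map_prod \<sigma> \<tau> a) = \<kappa> a"
proof -
  have "bij (map_prod \<sigma> \<tau>)"
    using G by (simp add: G_ce_def bij_map_prod)
  then obtain N where "0 < N" "map_prod \<sigma> \<tau> ^^ N = id"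
    by (rule bij_funpow_period)
  then have period: "periodic_map (map_prod \<sigma> \<tau>) N"
    by unfold_locales
  interpret periodic_map "map_prod \<sigma> \<tau>" N
    by (rule period)
  have p: "0 < p a" for a
    by (rule full_support_pos[OF full])
  have ch: "is_channel \<kappa>" and feasible: "lam \<le> D_push_fam \<kappa> p E_ce"
    and minimal: "\<And>\<kappa>'. is_channel \<kappa>' \<Longrightarrow> lam \<le> D_push_fam \<kappa>' p E_ce \<Longrightarrow> mutual_info p \<kappa> \<le> mutual_info p \<kappa>'"
    using \<kappa> unfolding DIB_ce_def by blast+
  have "mutual_info p \<kappa> \<le> mutual_info p (orbit_avg p \<kappa>)"
    using minimal[OF orbit_avg_is_channel[of p, OF p ch]]
      feasible D_push_fam_orbit_avg[OF full G period, of \<kappa>] order_trans by blast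
  then have "orbit_avg p \<kappa> = \<kappa>"
    by (rule orbit_avg_eq_if_mutual_info_le[of p, OF p ch])
  then show ?thesis
    using orbit_avg_apply[of p \<kappa> a] by simp
qed

lemma midpoint_map_prod_mem_E_ce:
  fixes r :: "'x::finite \<times> 'y::finite \<Rightarrow> real"
  assumes "r \<in> E_ce" "bij \<sigma>" "bij \<tau>"
  shows "(\<lambda>a. (r a + r (map_prod \<sigma> \<tau> a)) / 2) \<in> E_ce"
  unfolding mem_E_ce_iff
proof (intro conjI allI)
  have const: "r (x, y) = r (x, y')" and nonneg: "0 \<le> r a" and sum1: "sum r UNIV = 1"
    for x y y' a using \<open>r \<in> E_ce\<close> unfolding mem_E_ce_iff by blast+
  show "(r (x, y) + r (map_prod \<sigma> \<tau> (x, y))) / 2 = (r (x, y') + r (map_prod \<sigma> \<tau> (x, y'))) / 2"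
    for x y y'
    using const[of x y y'] const[of "\<sigma> x" "\<tau> y" "\<tau> y'"] by simp
  show "0 \<le> (r a + r (map_prod \<sigma> \<tau> a)) / 2" for a
    using nonneg[of a] nonneg[of "map_prod \<sigma> \<tau> a"] by simp
  have "(\<Sum>a\<in>UNIV. r (map_prod \<sigma> \<tau> a)) = sum r UNIV"
    using bij_map_prod[OF \<open>bij \<sigma>\<close> \<open>bij \<tau>\<close>] by (rule sum.reindex_bij_betw)
  then show "(\<Sum>a\<in>UNIV. (r a + r (map_prod \<sigma> \<tau> a)) / 2) = 1"
    using sum1 by (simp add: sum.distrib flip: sum_divide_distrib)
qed

text \<open>The equality case of joint convexity of relative entropy.\<close>
lemma ratio_invariant_if_kl_le_midpoint:
  fixes p q :: "'a::finite \<Rightarrow> real"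
  assumes "bij g" and p: "\<And>a. 0 < p a" and q: "\<And>a. 0 < q a"
    and le: "(\<Sum>a\<in>UNIV. p a * ln (p a / q a))
      \<le> (\<Sum>a\<in>UNIV. (p a + p (g a)) / 2 * ln ((p a + p (g a)) / 2 / ((q a + q (g a)) / 2)))"
  shows "p a / q a = p (g a) / q (g a)"
proof -
  define D where "D a = p a * ln (p a / q a) + p (g a) * ln (p (g a) / q (g a))
      - (p a + p (g a)) * ln ((p a + p (g a)) / (q a + q (g a)))" for a
  have mix: "(p a + p (g a)) * ln ((p a + p (g a)) / (q a + q (g a)))
      = 2 * ((p a + p (g a)) / 2 * ln ((p a + p (g a)) / 2 / ((q a + q (g a)) / 2)))" for a
  proof -
    have "(p a + p (g a)) / 2 / ((q a + q (g a)) / 2) = (p a + p (g a)) / (q a + q (g a))"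
      using q[of a] q[of "g a"] by (simp add: field_simps)
    then show ?thesis
      by (simp only:)
  qed
  have D_nonneg: "0 \<le> D a" for a
    unfolding D_def using log_sum_two(1)[OF p p q q] by simp
  have "(\<Sum>a\<in>UNIV. p (g a) * ln (p (g a) / q (g a))) = (\<Sum>a\<in>UNIV. p a * ln (p a / q a))"
    using \<open>bij g\<close> by (rule sum.reindex_bij_betw)
  then have "sum D UNIV = 2 * ((\<Sum>a\<in>UNIV. p a * ln (p a / q a))
      - (\<Sum>a\<in>UNIV. (p a + p (g a)) / 2 * ln ((p a + p (g a)) / 2 / ((q a + q (g a)) / 2))))"
    by (simp add: D_def mix sum.distrib sum_subtractf sum_distrib_left right_diff_distrib)
  moreover have "0 \<le> sum D UNIV"
    by (rule sum_nonneg) (rule D_nonneg)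
  ultimately have "sum D UNIV = 0"
    using le by argo
  then have "\<forall>a\<in>UNIV. D a = 0"
    by (simp add: sum_nonneg_eq_0_iff D_nonneg)
  then show ?thesis
    unfolding D_def using log_sum_two(2)[OF p p q q] by simp
qed

theorem G_ce_if_DIB_invariant:
  fixes p :: "'x::finite \<times> 'y::finite \<Rightarrow> real"
  assumes full: "full_support p" and "bij \<sigma>" "bij \<tau>"
    and \<kappa>: "\<kappa> \<in> DIB_ce p (D_fam p E_ce)" and inv: "\<And>a. \<kappa> (map_prod \<sigma> \<tau> a) = \<kappa> a"
  shows "(\<sigma>, \<tau>) \<in> G_ce p"
proof -
  define g where "g = map_prod \<sigma> \<tau>"
  define q where "q = E_ce_proj p"
  define p' where "p' a = (p a + p (g a)) / 2" for a
  define q' where "q' a = (q a + q (g a)) / 2" for a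
  have "bij g"
    unfolding g_def using \<open>bij \<sigma>\<close> \<open>bij \<tau>\<close> by (rule bij_map_prod)
  have p: "0 < p a" for a
    by (rule full_support_pos[OF full])
  have q: "0 < q a" for a
    unfolding q_def by (rule E_ce_proj_pos[OF full])
  have "q' \<in> E_ce"
    unfolding q'_def g_def q_def
    using E_ce_proj_mem_E_ce[OF full] \<open>bij \<sigma>\<close> \<open>bij \<tau>\<close> by (rule midpoint_map_prod_mem_E_ce)
  have ch: "is_channel \<kappa>" and feasible: "D_fam p E_ce \<le> D_push_fam \<kappa> p E_ce"
    using \<kappa> unfolding DIB_ce_def by blast+
  have "push \<kappa> p' = push \<kappa> p"
  proof
    fix t
    have "(\<Sum>a\<in>UNIV. \<kappa> a t * p (g a)) = (\<Sum>a\<in>UNIV. \<kappa> a t * p a)"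
      using sum.reindex_bij_betw[OF \<open>bij g\<close>, of "\<lambda>a. \<kappa> a t * p a"] inv unfolding g_def by simp
    then show "push \<kappa> p' t = push \<kappa> p t"
      unfolding push_def p'_def by (simp add: distrib_left sum.distrib flip: sum_divide_distrib)
  qed
  have "KL p q = D_fam p E_ce"
    unfolding q_def by (rule D_fam_E_ce[OF full, symmetric])
  also have "\<dots> \<le> KL (push \<kappa> p) (push \<kappa> q')"
    using feasible \<open>q' \<in> E_ce\<close> unfolding D_push_fam_def closure_E_ce
    by (meson INF_lower order_trans)
  also have "\<dots> = KL (push \<kappa> p') (push \<kappa> q')"
    by (simp only: \<open>push \<kappa> p' = push \<kappa> p\<close>)
  also have "\<dots> \<le> ereal (\<Sum>a\<in>UNIV. p' a * ln (p' a / q' a))"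
    using p q by (intro KL_push_le ch) (simp_all add: p'_def q'_def less_imp_le add_pos_pos)
  finally have "p a / q a = p (g a) / q (g a)" for a
    using KL_finite[where Q = q, OF q]
    by (intro ratio_invariant_if_kl_le_midpoint[OF \<open>bij g\<close> p q]) (simp add: p'_def q'_def)
  then have "cond_prob p (\<sigma> x) (\<tau> y) = cond_prob p x y" for x y
    unfolding cond_prob_eq_E_ce_proj q_def g_def by (metis map_prod_simp)
  then show ?thesis
    unfolding G_ce_def using \<open>bij \<sigma>\<close> \<open>bij \<tau>\<close> by blast
qed

definition q_example :: "3 \<times> bool \<Rightarrow> real" where
  "q_example = (\<lambda>(x, y). if x = 2 then (if y then 4/15 else 1/15) else (if y then 1/15 else 4/15))"

lemma sum_q_example_fst: "(\<Sum>y\<in>UNIV. q_example (x, y)) = 1/3"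
  by (simp add: UNIV_bool q_example_def)

lemma cond_prob_q_example: "cond_prob q_example x y = 3 * q_example (x, y)"
  unfolding cond_prob_def sum_q_example_fst by simp

lemma full_support_q_example: "full_support q_example"
proof -
  have "sum q_example UNIV = 1"
    unfolding sum_UNIV_prod sum_q_example_fst by simp
  then show ?thesis
    unfolding full_support_def prob_simplex_def by (auto simp: q_example_def)
qed

text \<open>Both \<open>(2, True)\<close> and \<open>(1, False)\<close> have conditional probability \<open>4/5\<close>, but an element of
  \<open>G_ce\<close> moving one to the other would have to swap the labels and then send both \<open>0\<close> and \<open>1\<close>
  to the only input \<open>2\<close> whose conditional probability of \<open>False\<close> is \<open>1/5\<close>.\<close>
lemma proj_cond_ne_proj_ce_example: "proj_cond q_example \<noteq> proj_ce q_example"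
proof
  assume eq: "proj_cond q_example = proj_ce q_example"
  have "(1, False) \<in> proj_cond q_example (2, True)"
    by (simp add: proj_cond_def cond_prob_q_example) (simp add: q_example_def)
  then have "(1, False) \<in> proj_ce q_example (2, True)"
    using eq by simp
  then obtain \<sigma> \<tau> where \<sigma>: "\<sigma> 2 = (1::3)" and \<tau>: "\<tau> True = False" and G: "(\<sigma>, \<tau>) \<in> G_ce q_example"
    unfolding proj_ce_def by auto
  then have "bij \<sigma>" and inv: "\<And>x y. cond_prob q_example (\<sigma> x) (\<tau> y) = cond_prob q_example x y"
    unfolding G_ce_def by auto
  have "\<sigma> x = 2" if "x \<noteq> 2" for x
  proof -
    have "cond_prob q_example (\<sigma> x) False = cond_prob q_example x True"
      using inv[of x True] \<tau> by simp
    then have "q_example (\<sigma> x, False) = 1/15"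
      using that by (simp add: cond_prob_q_example) (simp add: q_example_def)
    then show ?thesis
      by (auto simp: q_example_def split: if_splits)
  qed
  then have "\<sigma> 0 = \<sigma> 1"
    by simp
  then show False
    using bij_is_inj[OF \<open>bij \<sigma>\<close>] by (metis injD zero_neq_one)
qed

theorem theorem3:
  fixes p :: "'x::finite \<times> 'y::finite \<Rightarrow> real"
  assumes "full_support p"
  shows "(\<forall>\<sigma> \<tau> \<kappa>. bij \<sigma> \<and> bij \<tau> \<and> \<kappa> \<in> DIB_ce p (D_fam p E_ce) \<longrightarrow>
            ((\<sigma>, \<tau>) \<in> G_ce p \<longleftrightarrow> chan_comp \<kappa> (det_chan (map_prod \<sigma> \<tau>)) = \<kappa>))
       \<and> (\<forall>\<sigma> \<tau>. bij \<sigma> \<and> bij \<tau> \<and> (\<sigma>, \<tau>) \<in> G_ce p \<longrightarrow>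
            (\<forall>(lam::real) \<kappa>. 0 \<le> lam \<and> ereal lam \<le> D_fam p E_ce \<and> \<kappa> \<in> DIB_ce p (ereal lam) \<longrightarrow>
               chan_comp \<kappa> (det_chan (map_prod \<sigma> \<tau>)) = \<kappa>))
       \<and> (\<exists>q :: 3 \<times> bool \<Rightarrow> real. full_support q \<and> proj_cond q \<noteq> proj_ce q)"
proof (intro conjI allI impI)
  fix \<sigma> :: "'x \<Rightarrow> 'x" and \<tau> :: "'y \<Rightarrow> 'y" and \<kappa>
  assume "bij \<sigma> \<and> bij \<tau> \<and> \<kappa> \<in> DIB_ce p (D_fam p E_ce)"
  then show "(\<sigma>, \<tau>) \<in> G_ce p \<longleftrightarrow> chan_comp \<kappa> (det_chan (map_prod \<sigma> \<tau>)) = \<kappa>"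
    using DIB_ce_invariant[OF assms] G_ce_if_DIB_invariant[OF assms]
    by (auto simp: chan_comp_det_chan fun_eq_iff)
next
  fix \<sigma> :: "'x \<Rightarrow> 'x" and \<tau> :: "'y \<Rightarrow> 'y" and lam \<kappa>
  assume "bij \<sigma> \<and> bij \<tau> \<and> (\<sigma>, \<tau>) \<in> G_ce p"
    and "0 \<le> lam \<and> ereal lam \<le> D_fam p E_ce \<and> \<kappa> \<in> DIB_ce p (ereal lam)"
  then show "chan_comp \<kappa> (det_chan (map_prod \<sigma> \<tau>)) = \<kappa>"
    using DIB_ce_invariant[OF assms] by (auto simp: chan_comp_det_chan)
next
  show "\<exists>q :: 3 \<times> bool \<Rightarrow> real. full_support q \<and> proj_cond q \<noteq> proj_ce q"
    using full_support_q_example proj_cond_ne_proj_ce_example by blast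
qed

end
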